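(* Let $V$ be a finite nonempty set, $c\in\mathbb{R}^{P_V}$, $\hat x$ a maximally specific partial function on $P_V$, $U\subseteq V$, $\hat x'=\hat x|_{P_U}$, $c'=c|_{P_U}$, $ij\in P_U\setminus\operatorname{dom}(\hat x)$, $b\in\{0,1\}$ and $y\in\operatorname{argmax}\{\varphi_{c'}(x')\mid x'\in X_U[\hat x'],\ x'_{ij}=b\}$. Let $\tau\in\{\tau^y_{\mathrm{out}},\tau^y_{\mathrm{in}},\tau^y_{\mathrm{bd}}\}$ with corresponding sets $P''_{01},P''_{10}$ given in the context. Then for every $x\in X_V[\hat x]$: $$\sum_{pq\in\delta(U)}c_{pq}\big(x_{pq}-\tau(x)_{pq}\big)\le\sum_{pq\in P''_{01}}c^-_{pq}+\sum_{pq\in P''_{10}}c^+_{pq}.$$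
   Context: For a finite set $W$, $P_W=\{pq\in W^2\mid p\neq q\}$, $X_W$ is the set of $x\in\{0,1\}^{P_W}$ with $x_{pq}+x_{qr}-x_{pr}\le1$ for all pairwise distinct $p,q,r\in W$, and $\varphi_c(x)=\sum_{pq\in P_W}c_{pq}x_{pq}$. A partial function $\tilde x$ on $P_W$ is a map from $\operatorname{dom}(\tilde x)\subseteq P_W$ to $\{0,1\}$, $\tilde x^{-1}(b)$ the pairs mapped to $b$, $X_W[\tilde x]=\{x\in X_W\mid x_{pq}=\tilde x_{pq}\ \forall pq\in\operatorname{dom}(\tilde x)\}$; convention $x_{aa}=1$, $y_{aa}=1$ for all $a$. A pair is decided if it has the same value in all completions; $\tilde x$ is maximally specific if $X_W[\tilde x]\ne\emptyset$ and the decided pairs are exactly $\operatorname{dom}(\tilde x)$. Restrictions to $P_U$ are the obvious ones. $\delta(U)=(U\times(V\setminus U))\cup((V\setminus U)\times U)$. For $x\in X_V[\hat x]$: $\tau^y_{\mathrm{out}}(x)_{pq}$ equals $y_{pq}$ on $P_U$; $0$ on $U\times(V\setminus U)$; on $(V\setminus U)\times U$, $1$ if $\exists r\in U: x_{pr}=1\wedge y_{rq}=1$ and $0$ otherwise; $x_{pq}$ on $P_{V\setminus U}$. $\tau^y_{\mathrm{in}}(x)_{pq}$ equals $y_{pq}$ on $P_U$; $0$ on $(V\setminus U)\times U$; on $U\times(V\setminus U)$, $1$ if $\exists r\in U: y_{pr}=1\wedge x_{rq}=1$ and $0$ otherwise; $x_{pq}$ on $P_{V\setminus U}$. $\tau^y_{\mathrm{bd}}(x)_{pq}$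 equals $y_{pq}$ on $P_U$; $0$ on $\delta(U)$; $x_{pq}$ on $P_{V\setminus U}$. Sets: for $\tau^y_{\mathrm{out}}$: $P''_{01}=((V\setminus U)\times U)\setminus\hat x^{-1}(1)$, $P''_{10}=(U\times(V\setminus U))\setminus\hat x^{-1}(0)$; for $\tau^y_{\mathrm{in}}$: $P''_{01}=(U\times(V\setminus U))\setminus\hat x^{-1}(1)$, $P''_{10}=((V\setminus U)\times U)\setminus\hat x^{-1}(0)$; for $\tau^y_{\mathrm{bd}}$: $P''_{01}=\emptyset$, $P''_{10}=\delta(U)\setminus\hat x^{-1}(0)$. For real $a$: $a^+=\max(a,0)$, $a^-=\max(-a,0)$. *)

theory Defs
  imports Complex_Main
begin

definition P :: "'a set \<Rightarrow> ('a \<times> 'a) set" where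
  "P W = {(p, q). p \<in> W \<and> q \<in> W \<and> p \<noteq> q}"

text \<open>Elements of {0,1}^{P_W} are represented as boolean functions on pairs that are
  False outside P_W (so that each element of {0,1}^{P_W} has exactly one representative).\<close>
definition X :: "'a set \<Rightarrow> ('a \<times> 'a \<Rightarrow> bool) set" where
  "X W = {x. (\<forall>pq. pq \<notin> P W \<longrightarrow> \<not> x pq) \<and>
     (\<forall>p\<in>W. \<forall>q\<in>W. \<forall>r\<in>W. p \<noteq> q \<and> q \<noteq> r \<and> p \<noteq> r \<longrightarrow>
        of_bool (x (p, q)) + of_bool (x (q, r)) - of_bool (x (p, r)) \<le> (1::int))}"

definition phi :: "('a \<times> 'a \<Rightarrow> real) \<Rightarrow> 'a set \<Rightarrow> ('a \<times> 'a \<Rightarrow> bool) \<Rightarrow> real" where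
  "phi c W x = (\<Sum>pq\<in>P W. c pq * of_bool (x pq))"

definition Xp :: "'a set \<Rightarrow> ('a \<times> 'a \<rightharpoonup> bool) \<Rightarrow> ('a \<times> 'a \<Rightarrow> bool) set" where
  "Xp W xt = {x \<in> X W. \<forall>pq\<in>dom xt. xt pq = Some (x pq)}"

definition decided :: "'a set \<Rightarrow> ('a \<times> 'a \<rightharpoonup> bool) \<Rightarrow> ('a \<times> 'a) set" where
  "decided W xt = {pq \<in> P W. \<forall>x\<in>Xp W xt. \<forall>x'\<in>Xp W xt. x pq = x' pq}"

definition maximally_specific :: "'a set \<Rightarrow> ('a \<times> 'a \<rightharpoonup> bool) \<Rightarrow> bool" where
  "maximally_specific W xt \<longleftrightarrow> dom xt \<subseteq> P W \<and> Xp W xt \<noteq> {} \<and> decided W xt = dom xt"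

definition ent :: "('a \<times> 'a \<Rightarrow> bool) \<Rightarrow> 'a \<Rightarrow> 'a \<Rightarrow> bool" where
  "ent x p q \<longleftrightarrow> p = q \<or> x (p, q)"

definition delta :: "'a set \<Rightarrow> 'a set \<Rightarrow> ('a \<times> 'a) set" where
  "delta V U = (U \<times> (V - U)) \<union> ((V - U) \<times> U)"

datatype tau_kind = Out | In | Bd

definition tau :: "tau_kind \<Rightarrow> 'a set \<Rightarrow> 'a set \<Rightarrow> ('a \<times> 'a \<Rightarrow> bool) \<Rightarrow>
    ('a \<times> 'a \<Rightarrow> bool) \<Rightarrow> ('a \<times> 'a \<Rightarrow> bool)" where
  "tau k V U y x = (\<lambda>(p, q).
     if (p, q) \<in> P U then y (p, q)
     else if (p, q) \<in> P (V - U) then x (p, q)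
     else if p \<in> V - U \<and> q \<in> U then
       (case k of Out \<Rightarrow> (\<exists>r\<in>U. ent x p r \<and> ent y r q) | _ \<Rightarrow> False)
     else if p \<in> U \<and> q \<in> V - U then
       (case k of In \<Rightarrow> (\<exists>r\<in>U. ent y p r \<and> ent x r q) | _ \<Rightarrow> False)
     else False)"

definition P01 :: "tau_kind \<Rightarrow> 'a set \<Rightarrow> 'a set \<Rightarrow> ('a \<times> 'a \<rightharpoonup> bool) \<Rightarrow> ('a \<times> 'a) set" where
  "P01 k V U xh = (case k of
      Out \<Rightarrow> ((V - U) \<times> U) - {pq. xh pq = Some True}
    | In \<Rightarrow> (U \<times> (V - U)) - {pq. xh pq = Some True}
    | Bd \<Rightarrow> {})"

definition P10 :: "tau_kind \<Rightarrow> 'a set \<Rightarrow> 'a set \<Rightarrow> ('a \<times> 'a \<rightharpoonup> bool) \<Rightarrow> ('a \<times> 'a) set" where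
  "P10 k V U xh = (case k of
      Out \<Rightarrow> (U \<times> (V - U)) - {pq. xh pq = Some False}
    | In \<Rightarrow> ((V - U) \<times> U) - {pq. xh pq = Some False}
    | Bd \<Rightarrow> delta V U - {pq. xh pq = Some False})"

definition pos_part :: "real \<Rightarrow> real" where "pos_part a = max a 0"
definition neg_part :: "real \<Rightarrow> real" where "neg_part a = max (- a) 0"

end

theory Submission
  imports Defs
begin

text \<open>The bound holds term by term. On the side of the cut where \<open>\<tau>\<close> propagates x through y
  (pairs leaving V - U for \<open>\<tau>\<^sub>o\<^sub>u\<^sub>t\<close>, pairs entering it for \<open>\<tau>\<^sub>i\<^sub>n\<close>), the witness r = q
  gives \<open>x\<^sub>p\<^sub>q \<le> \<tau>(x)\<^sub>p\<^sub>q\<close>, so the term \<open>c\<^sub>p\<^sub>q (x\<^sub>p\<^sub>q - \<tau>(x)\<^sub>p\<^sub>q)\<close> is at most \<open>c\<^sup>-\<^sub>p\<^sub>q\<close>,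
  and it vanishes if xh fixes \<open>x\<^sub>p\<^sub>q = 1\<close>. On every other boundary pair \<open>\<tau>(x)\<^sub>p\<^sub>q = 0\<close>, so
  the term is at most \<open>c\<^sup>+\<^sub>p\<^sub>q\<close>, and it vanishes if xh fixes \<open>x\<^sub>p\<^sub>q = 0\<close>.\<close>

definition propagated :: "tau_kind \<Rightarrow> 'a set \<Rightarrow> 'a set \<Rightarrow> ('a \<times> 'a) set" where
  "propagated k V U = (case k of Out \<Rightarrow> (V - U) \<times> U | In \<Rightarrow> U \<times> (V - U) | Bd \<Rightarrow> {})"

lemma propagated_subset_delta: "propagated k V U \<subseteq> delta V U"
  by (cases k) (auto simp: propagated_def delta_def)

lemma P01_eq: "P01 k V U xh = propagated k V U - {pq. xh pq = Some True}"
  by (cases k) (auto simp: P01_def propagated_def)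

lemma P10_eq: "P10 k V U xh = (delta V U - propagated k V U) - {pq. xh pq = Some False}"
  by (cases k) (auto simp: P10_def propagated_def delta_def)

lemma Xp_eq_Some:
  assumes "x \<in> Xp W xh" and "xh pq = Some v"
  shows "x pq = v"
  using assms by (force simp: Xp_def)

lemma tau_ge_on_propagated:
  assumes "pq \<in> propagated k V U" and "x pq"
  shows "tau k V U y x pq"
  using assms by (cases k) (auto simp: tau_def propagated_def P_def ent_def)

lemma tau_eq_False_off_propagated:
  assumes "pq \<in> delta V U - propagated k V U"
  shows "\<not> tau k V U y x pq"
  using assms by (cases k) (auto simp: tau_def propagated_def delta_def P_def)

lemma boundary_term_le:
  assumes x: "x \<in> Xp V xh" and pq: "pq \<in> delta V U"
  shows "c pq * (of_bool (x pq) - of_bool (tau k V U y x pq))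
     \<le> (if pq \<in> P01 k V U xh then neg_part (c pq) else 0)
      + (if pq \<in> P10 k V U xh then pos_part (c pq) else 0)"
proof (cases "pq \<in> propagated k V U")
  case True
  have "x pq \<longrightarrow> tau k V U y x pq"
    using tau_ge_on_propagated[OF True] by blast
  moreover have "xh pq = Some True \<longrightarrow> x pq"
    using Xp_eq_Some[OF x] by blast
  ultimately show ?thesis
    using True by (auto simp: P01_eq P10_eq neg_part_def pos_part_def)
next
  case False
  have "\<not> tau k V U y x pq"
    using tau_eq_False_off_propagated pq False by blast
  moreover have "xh pq = Some False \<longrightarrow> \<not> x pq"
    using Xp_eq_Some[OF x] by blast
  ultimately show ?thesis
    using False pq by (auto simp: P01_eq P10_eq neg_part_def pos_part_def)
qed

theorem corollary7p5:
  fixes V U :: "'a set" and c :: "'a \<times> 'a \<Rightarrow> real"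
    and xh :: "'a \<times> 'a \<rightharpoonup> bool" and i j :: 'a and b :: bool
    and y :: "'a \<times> 'a \<Rightarrow> bool" and k :: tau_kind
  assumes "finite V" and "V \<noteq> {}"
    and "maximally_specific V xh"
    and "U \<subseteq> V"
    and "(i, j) \<in> P U - dom xh"
    and "y \<in> Xp U (xh |` P U)" and "y (i, j) = b"
    and "\<forall>x'\<in>Xp U (xh |` P U). x' (i, j) = b \<longrightarrow> phi c U x' \<le> phi c U y"
  shows "\<forall>x\<in>Xp V xh.
    (\<Sum>pq\<in>delta V U. c pq * (of_bool (x pq) - of_bool (tau k V U y x pq)))
      \<le> (\<Sum>pq\<in>P01 k V U xh. neg_part (c pq)) + (\<Sum>pq\<in>P10 k V U xh. pos_part (c pq))"
proof
  fix x assume x: "x \<in> Xp V xh"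
  have fin: "finite (delta V U)"
    using \<open>finite V\<close> \<open>U \<subseteq> V\<close> finite_subset by (auto simp: delta_def)
  have "P01 k V U xh \<subseteq> delta V U" "P10 k V U xh \<subseteq> delta V U"
    using propagated_subset_delta by (auto simp: P01_eq P10_eq)
  then have restrict: "(\<Sum>pq\<in>P01 k V U xh. neg_part (c pq))
        = (\<Sum>pq\<in>delta V U. if pq \<in> P01 k V U xh then neg_part (c pq) else 0)"
      "(\<Sum>pq\<in>P10 k V U xh. pos_part (c pq))
        = (\<Sum>pq\<in>delta V U. if pq \<in> P10 k V U xh then pos_part (c pq) else 0)"
    using sum.inter_restrict[OF fin] by (metis inf.absorb2)+
  show "(\<Sum>pq\<in>delta V U. c pq * (of_bool (x pq) - of_bool (tau k V U y x pq)))
      \<le> (\<Sum>pq\<in>P01 k V U xh. neg_part (c pq)) + (\<Sum>pq\<in>P10 k V U xh. pos_part (c pq))"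
    unfolding restrict sum.distrib[symmetric]
    by (rule sum_mono) (rule boundary_term_le[OF x])
qed

end
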